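(* Consider $K$ arms with reward distributions supported on $[0,1]$, variances $\sigma_1^2,\dots,\sigma_K^2$, a unique arm $*$ of maximal variance $\sigma_*^2$, and gaps $\delta_i=\sigma_*^2-\sigma_i^2$. Run the sequential halving algorithm SHVV with budget $n$: starting from the set of all arms, in each round $r$ every arm in the current set $A_r$ is pulled $t_r=\frac{n}{|A_r|\log_2 K}$ times, the empirical (sample) variance $\bar V_i(t_r)=\frac{1}{t_r-1}\sum_{q=1}^{t_r}(X_{i,q}-\bar X_i(t_r))^2$ of these $t_r$ rewards is computed for each $i\in A_r$ ($\bar X_i(t_r)$ their mean), and the $\lceil |A_r|/2\rceil$ arms with largest empirical variance form $A_{r+1}$. Assume the best arm $*$ has not been eliminated prior to round $r$. Then for any arm $i\in A_r$, $$\mathbb{P}\big(\bar V_i(t_r)>\bar V_*(t_r)\big)\le \exp\Big(-\frac{(t_r-1)^2\delta_i^2}{2t_r}\Big).$$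
   Context: Rewards are independent across arms and pulls. *)

theory Defs
  imports "HOL-Probability.Probability"
begin

definition dist_var :: "real measure \<Rightarrow> real" where
  "dist_var D = (\<integral>x. (x - (\<integral>y. y \<partial>D))\<^sup>2 \<partial>D)"

definition sample_mean :: "nat \<Rightarrow> (nat \<Rightarrow> real) \<Rightarrow> real" where
  "sample_mean t x = (\<Sum>q=1..t. x q) / real t"

definition sample_var :: "nat \<Rightarrow> (nat \<Rightarrow> real) \<Rightarrow> real" where
  "sample_var t x = (1 / (real t - 1)) * (\<Sum>q=1..t. (x q - sample_mean t x)\<^sup>2)"

end

theory Submission
  imports Defs
begin

text \<open>
  For samples x_1, ..., x_t, t (t - 1) sample_var t x is the sum of (x_a - x_b)^2 over the
  pairs a < b.  So V_i > V_s iff the pair contrasts ((X_i,a - X_i,b)^2 - (X_s,a - X_s,b)^2) / 2,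
  which lie in [-1/2, 1/2] and have mean -(sigma_s^2 - sigma_i^2), have a positive sum.
  Contrasts of overlapping pairs are dependent; following Hoeffding's treatment of
  U-statistics, the pairs are split into the cyclic matchings {(a, b). a + b = r mod t}.
  Within a matching the pairs are disjoint, so the contrasts are independent, and every
  nonempty matching has at least (t - 1)^2 / (4 t) pairs.  The suitably scaled total is a
  convex combination of the matching averages, so by convexity of exp its moment generating
  function is at most the average of theirs, each bounded by Hoeffding's lemma; the Chernoff
  bound concludes.
\<close>

section \<open>Sample variance and cyclic matchings\<close>

lemma sum_lower_pairs_sq_diff:
  fixes x :: "nat \<Rightarrow> real"
  shows "(\<Sum>b<n. \<Sum>a<b. (x a - x b)\<^sup>2) = real n * (\<Sum>a<n. (x a)\<^sup>2) - (\<Sum>a<n. x a)\<^sup>2"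
proof (induction n)
  case (Suc n)
  have "(\<Sum>a<n. (x a - x n)\<^sup>2) = (\<Sum>a<n. (x a)\<^sup>2) - 2 * x n * (\<Sum>a<n. x a) + real n * (x n)\<^sup>2"
    by (simp add: power2_diff sum.distrib sum_subtractf sum_distrib_left mult_ac)
  with Suc show ?case by (simp add: power2_sum algebra_simps)
qed simp

lemma sample_var_eq_sum_lower_pairs:
  assumes "2 \<le> t"
  shows "sample_var t x = (\<Sum>b<t. \<Sum>a<b. (x (Suc a) - x (Suc b))\<^sup>2) / (real t * (real t - 1))"
proof -
  define y where "y k = x (Suc k)" for k
  define m where "m = (\<Sum>k<t. y k) / real t"
  have shift: "sum f {1..t} = (\<Sum>k<t. f (Suc k))" for f :: "nat \<Rightarrow> real"
    by (metis One_nat_def sum.atLeast1_atMost_eq)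
  have "sample_var t x = (\<Sum>k<t. (y k - m)\<^sup>2) / (real t - 1)"
    unfolding sample_var_def sample_mean_def shift y_def m_def by simp
  also have "(\<Sum>k<t. (y k - m)\<^sup>2) = (\<Sum>k<t. (y k)\<^sup>2) - 2 * m * (\<Sum>k<t. y k) + real t * m\<^sup>2"
    by (simp add: power2_diff sum.distrib sum_subtractf sum_distrib_left mult_ac)
  also have "\<dots> = (real t * (\<Sum>k<t. (y k)\<^sup>2) - (\<Sum>k<t. y k)\<^sup>2) / real t"
    using assms by (simp add: m_def field_simps power2_eq_square)
  finally show ?thesis
    using sum_lower_pairs_sq_diff[of y t] by (simp add: y_def)
qed

definition cyclic_matching :: "nat \<Rightarrow> nat \<Rightarrow> (nat \<times> nat) set" where
  "cyclic_matching n r = {(a, b). a < b \<and> b < n \<and> (a + b) mod n = r}"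

lemma finite_cyclic_matching [simp]: "finite (cyclic_matching n r)"
  by (rule finite_subset[of _ "{..<n} \<times> {..<n}"]) (auto simp: cyclic_matching_def)

lemma cyclic_matching_disjoint:
  assumes "(a, b) \<in> cyclic_matching n r" "(a', b') \<in> cyclic_matching n r" "(a, b) \<noteq> (a', b')"
  shows "{a, b} \<inter> {a', b'} = {}"
proof -
  have "a + b \<in> {r, r + n}" "a' + b' \<in> {r, r + n}"
    using assms(1,2) by (auto simp: cyclic_matching_def mod_if le_mod_geq split: if_splits)
  then show ?thesis
    using assms by (auto simp: cyclic_matching_def)
qed

lemma sum_lower_pairs_eq_sum_cyclic_matchings:
  "(\<Sum>b<n. \<Sum>a<b. f a b) = (\<Sum>r<n. \<Sum>(a, b)\<in>cyclic_matching n r. f a b)"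
proof -
  have "(\<Sum>b<n. \<Sum>a<b. f a b) = (\<Sum>(b, a)\<in>(SIGMA b:{..<n}. {..<b}). f a b)"
    by (simp add: sum.Sigma)
  also have "\<dots> = (\<Sum>(a, b)\<in>(\<Union>r<n. cyclic_matching n r). f a b)"
    by (rule sum.reindex_bij_witness[of _ prod.swap prod.swap]) (auto simp: cyclic_matching_def)
  also have "\<dots> = (\<Sum>r<n. \<Sum>(a, b)\<in>cyclic_matching n r. f a b)"
    using finite_cyclic_matching by (intro sum.UNION_disjoint) (auto simp: cyclic_matching_def)
  finally show ?thesis .
qed

lemma card_cyclic_matching_ge:
  assumes "r < n"
  shows "real n - 2 \<le> 2 * real (card (cyclic_matching n r))"
proof -
  define below where "below = (\<lambda>a. (a, r - a)) ` {..< (r + 1) div 2}"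
  define above where "above = (\<lambda>a. (a, r + n - a)) ` {Suc r..< (r + n + 1) div 2}"
  have "card below = (r + 1) div 2" "card above = (r + n + 1) div 2 - Suc r"
    unfolding below_def above_def by (subst card_image; auto simp: inj_on_def)+
  then have "n \<le> 2 + 2 * card (below \<union> above)"
    using assms by (subst card_Un_disjoint) (auto simp: below_def above_def)
  also have "below \<union> above \<subseteq> cyclic_matching n r"
    using assms by (auto simp: below_def above_def cyclic_matching_def)
  then have "card (below \<union> above) \<le> card (cyclic_matching n r)"
    by (intro card_mono) auto
  finally show ?thesis by linarith
qed

lemma card_cyclic_matching_ge_nonempty:
  assumes "r < n" and "cyclic_matching n r \<noteq> {}"
  shows "(real n - 1)\<^sup>2 / (4 * real n) \<le> real (card (cyclic_matching n r))"
proof -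
  define c where "c = real (card (cyclic_matching n r))"
  have "1 \<le> c" "real n - 2 \<le> 2 * c"
    using assms card_cyclic_matching_ge[OF assms(1)] by (auto simp: c_def Suc_le_eq card_gt_0_iff)
  moreover have "0 < n"
    using assms(1) by simp
  ultimately have "(real n - 1)\<^sup>2 \<le> 4 * real n * c"
  proof (cases "n \<le> 2")
    case True
    with \<open>0 < n\<close> have "n = 1 \<or> n = 2" by auto
    then have "(real n - 1)\<^sup>2 \<le> 4 * real n * 1"
      by (elim disjE) (simp_all add: power2_eq_square)
    also have "\<dots> \<le> 4 * real n * c"
      using \<open>1 \<le> c\<close> by (intro mult_left_mono) auto
    finally show ?thesis .
  next
    case False
    then have "2 * 2 \<le> (real n - 1) * (real n - 1)"
      by (intro mult_mono) auto
    then have "(real n - 1)\<^sup>2 \<le> 2 * real n * (real n - 2)"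
      by (simp add: power2_eq_square algebra_simps)
    also have "\<dots> \<le> 2 * real n * (2 * c)"
      using \<open>real n - 2 \<le> 2 * c\<close> by (intro mult_left_mono) auto
    finally show ?thesis by simp
  qed
  then show ?thesis
    using \<open>0 < n\<close> by (simp add: c_def field_simps)
qed

lemma sample_var_less_iff_sum_cyclic_matchings:
  fixes x y :: "nat \<Rightarrow> real"
  assumes "2 \<le> t"
  shows "sample_var t y < sample_var t x \<longleftrightarrow>
    0 < (\<Sum>r<t. \<Sum>(a, b)\<in>cyclic_matching t r. ((x (Suc a) - x (Suc b))\<^sup>2 - (y (Suc a) - y (Suc b))\<^sup>2) / 2)"
proof -
  have cancel: "A / c < B / c \<longleftrightarrow> A < B" if "0 < c" for A B c :: real
    using that by (simp add: divide_less_cancel)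
  have "sample_var t y < sample_var t x \<longleftrightarrow>
      (\<Sum>b<t. \<Sum>a<b. (y (Suc a) - y (Suc b))\<^sup>2) < (\<Sum>b<t. \<Sum>a<b. (x (Suc a) - x (Suc b))\<^sup>2)"
    unfolding sample_var_eq_sum_lower_pairs[OF assms] using assms by (intro cancel) simp
  also have "\<dots> \<longleftrightarrow> 0 < (\<Sum>b<t. \<Sum>a<b. ((x (Suc a) - x (Suc b))\<^sup>2 - (y (Suc a) - y (Suc b))\<^sup>2) / 2)"
    by (simp add: sum_subtractf flip: sum_divide_distrib)
  finally show ?thesis
    by (simp only: sum_lower_pairs_eq_sum_cyclic_matchings)
qed

section \<open>Chernoff--Hoeffding bounds for sums over independent groups\<close>

lemma (in prob_space) nn_integral_exp_sum_indep_le: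
  fixes X :: "'i \<Rightarrow> 'a \<Rightarrow> real"
  assumes fin: "finite I" and indep: "indep_vars (\<lambda>_. borel) X I"
    and "\<And>i. i \<in> I \<Longrightarrow> AE \<omega> in M. X i \<omega> \<in> {a..b}" and "0 < l"
  shows "(\<integral>\<^sup>+\<omega>. exp (l * (\<Sum>i\<in>I. X i \<omega>)) \<partial>M)
           \<le> ennreal (exp (l * (\<Sum>i\<in>I. expectation (X i)) + real (card I) * l\<^sup>2 * (b - a)\<^sup>2 / 8))"
proof -
  interpret indep_interval_bounded_random_variables M I X "\<lambda>_. a" "\<lambda>_. b"
    by unfold_locales (use assms in auto)
  have mgf: "(\<integral>\<^sup>+\<omega>. exp (l * X i \<omega>) \<partial>M) \<le> ennreal (exp (l * expectation (X i) + l\<^sup>2 * (b - a)\<^sup>2 / 8))"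
    if "i \<in> I" for i
  proof -
    interpret interval_bounded_random_variable M "X i" a b
      using that ..
    have "(\<integral>\<^sup>+\<omega>. exp (l * X i \<omega>) \<partial>M)
        = (\<integral>\<^sup>+\<omega>. ennreal (exp (l * expectation (X i))) * exp (l * (X i \<omega> - expectation (X i))) \<partial>M)"
      by (intro nn_integral_cong) (simp flip: ennreal_mult exp_add add: algebra_simps)
    also have "\<dots> = exp (l * expectation (X i)) * (\<integral>\<^sup>+\<omega>. exp (l * (X i \<omega> - expectation (X i))) \<partial>M)"
      by (rule nn_integral_cmult) measurable
    also have "\<dots> \<le> exp (l * expectation (X i)) * ennreal (exp (l\<^sup>2 * (b - a)\<^sup>2 / 8))"
      by (intro mult_left_mono Hoeffdings_lemma_nn_integral \<open>0 < l\<close>) auto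
    finally show ?thesis
      by (simp flip: ennreal_mult exp_add)
  qed
  have "(\<integral>\<^sup>+\<omega>. exp (l * (\<Sum>i\<in>I. X i \<omega>)) \<partial>M) = (\<integral>\<^sup>+\<omega>. (\<Prod>i\<in>I. ennreal (exp (l * X i \<omega>))) \<partial>M)"
    by (intro nn_integral_cong) (simp add: sum_distrib_left exp_sum fin prod_ennreal)
  also have "\<dots> = (\<Prod>i\<in>I. \<integral>\<^sup>+\<omega>. exp (l * X i \<omega>) \<partial>M)"
    by (intro indep_vars_nn_integral fin indep_vars_compose2[OF indep]) auto
  also have "\<dots> \<le> (\<Prod>i\<in>I. ennreal (exp (l * expectation (X i) + l\<^sup>2 * (b - a)\<^sup>2 / 8)))"
    by (intro prod_mono_ennreal mgf)
  also have "\<dots> = ennreal (exp (l * (\<Sum>i\<in>I. expectation (X i)) + real (card I) * l\<^sup>2 * (b - a)\<^sup>2 / 8))"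
    by (simp add: prod_ennreal fin sum.distrib sum_distrib_left flip: exp_sum)
  finally show ?thesis .
qed

lemma nn_integral_exp_convex_combination_le:
  fixes Y :: "'r \<Rightarrow> 'a \<Rightarrow> real"
  assumes "finite R" and w_nonneg: "\<And>r. r \<in> R \<Longrightarrow> 0 \<le> w r" and "(\<Sum>r\<in>R. w r) = 1"
    and [measurable]: "\<And>r. r \<in> R \<Longrightarrow> Y r \<in> borel_measurable M"
  shows "(\<integral>\<^sup>+\<omega>. exp (\<Sum>r\<in>R. w r * Y r \<omega>) \<partial>M) \<le> (\<Sum>r\<in>R. w r * (\<integral>\<^sup>+\<omega>. exp (Y r \<omega>) \<partial>M))"
proof -
  have "R \<noteq> {}"
    using assms by auto
  have "(\<integral>\<^sup>+\<omega>. exp (\<Sum>r\<in>R. w r * Y r \<omega>) \<partial>M) \<le> (\<integral>\<^sup>+\<omega>. (\<Sum>r\<in>R. w r * ennreal (exp (Y r \<omega>))) \<partial>M)"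
  proof (intro nn_integral_mono)
    fix \<omega>
    have "exp (\<Sum>r\<in>R. w r *\<^sub>R Y r \<omega>) \<le> (\<Sum>r\<in>R. w r * exp (Y r \<omega>))"
      using assms \<open>R \<noteq> {}\<close> by (intro convex_on_sum[OF _ _ exp_convex]) auto
    then have "ennreal (exp (\<Sum>r\<in>R. w r * Y r \<omega>)) \<le> ennreal (\<Sum>r\<in>R. w r * exp (Y r \<omega>))"
      by (intro ennreal_leI) simp
    also have "\<dots> = (\<Sum>r\<in>R. w r * ennreal (exp (Y r \<omega>)))"
      using w_nonneg by (subst sum_ennreal[symmetric]) (auto simp: ennreal_mult)
    finally show "ennreal (exp (\<Sum>r\<in>R. w r * Y r \<omega>)) \<le> (\<Sum>r\<in>R. w r * ennreal (exp (Y r \<omega>)))" .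
  qed
  also have "\<dots> = (\<Sum>r\<in>R. w r * (\<integral>\<^sup>+\<omega>. exp (Y r \<omega>) \<partial>M))"
    by (simp add: nn_integral_sum nn_integral_cmult)
  finally show ?thesis .
qed

lemma (in prob_space) nn_integral_exp_mean_indep_le:
  fixes X :: "'i \<Rightarrow> 'a \<Rightarrow> real"
  assumes "finite I" and "indep_vars (\<lambda>_. borel) X I"
    and "\<And>i. i \<in> I \<Longrightarrow> AE \<omega> in M. X i \<omega> \<in> {a..b}"
    and mean: "\<And>i. i \<in> I \<Longrightarrow> expectation (X i) \<le> \<mu>" and "0 < l"
    and "0 < k" "k \<le> real (card I)"
  shows "(\<integral>\<^sup>+\<omega>. exp (l * (\<Sum>i\<in>I. X i \<omega>) / card I) \<partial>M) \<le> ennreal (exp (l * \<mu> + l\<^sup>2 * (b - a)\<^sup>2 / (8 * k)))"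
proof -
  define n where "n = real (card I)"
  have "0 < n"
    using assms by (simp add: n_def)
  have "(\<integral>\<^sup>+\<omega>. exp (l * (\<Sum>i\<in>I. X i \<omega>) / card I) \<partial>M) = (\<integral>\<^sup>+\<omega>. exp ((l / n) * (\<Sum>i\<in>I. X i \<omega>)) \<partial>M)"
    by (simp add: n_def)
  also have "\<dots> \<le> ennreal (exp ((l / n) * (\<Sum>i\<in>I. expectation (X i)) + n * (l / n)\<^sup>2 * (b - a)\<^sup>2 / 8))"
    unfolding n_def using assms \<open>0 < n\<close> by (intro nn_integral_exp_sum_indep_le) (auto simp: n_def)
  also have "(l / n) * (\<Sum>i\<in>I. expectation (X i)) + n * (l / n)\<^sup>2 * (b - a)\<^sup>2 / 8
      \<le> l * \<mu> + l\<^sup>2 * (b - a)\<^sup>2 / (8 * k)"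
  proof -
    have "(l / n) * (\<Sum>i\<in>I. expectation (X i)) \<le> (l / n) * (n * \<mu>)"
      using sum_mono[OF mean, of I] \<open>0 < l\<close> \<open>0 < n\<close> by (intro mult_left_mono) (auto simp: n_def)
    moreover have "n * (l / n)\<^sup>2 * (b - a)\<^sup>2 / 8 = l\<^sup>2 * (b - a)\<^sup>2 / (8 * n)"
      using \<open>0 < n\<close> by (simp add: field_simps power2_eq_square)
    moreover have "l\<^sup>2 * (b - a)\<^sup>2 / (8 * n) \<le> l\<^sup>2 * (b - a)\<^sup>2 / (8 * k)"
      using assms by (intro divide_left_mono) (auto simp: n_def)
    ultimately show ?thesis
      using \<open>0 < n\<close> by simp
  qed
  finally show ?thesis
    by (simp add: ennreal_leI)
qed

lemma (in prob_space) nn_integral_exp_mean_indep_le_Hoeffding: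
  fixes X :: "'i \<Rightarrow> 'a \<Rightarrow> real"
  assumes "finite I" and "indep_vars (\<lambda>_. borel) X I"
    and "\<And>i. i \<in> I \<Longrightarrow> AE \<omega> in M. X i \<omega> \<in> {a..b}"
    and "\<And>i. i \<in> I \<Longrightarrow> expectation (X i) \<le> -\<delta>"
    and "0 < \<delta>" "a < b" "0 < k" "k \<le> real (card I)"
  shows "(\<integral>\<^sup>+\<omega>. exp (4 * k * \<delta> / (b - a)\<^sup>2 * (\<Sum>i\<in>I. X i \<omega>) / card I) \<partial>M)
           \<le> ennreal (exp (- 2 * k * \<delta>\<^sup>2 / (b - a)\<^sup>2))"
proof -
  define l where "l = 4 * k * \<delta> / (b - a)\<^sup>2"
  have arith: "(4 * k * \<delta> / v) * -\<delta> + (4 * k * \<delta> / v)\<^sup>2 * v / (8 * k) = - 2 * k * \<delta>\<^sup>2 / v" if "0 < v" for v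
    using that \<open>0 < k\<close> by (simp add: field_simps power2_eq_square)
  have "(\<integral>\<^sup>+\<omega>. exp (l * (\<Sum>i\<in>I. X i \<omega>) / card I) \<partial>M) \<le> ennreal (exp (l * -\<delta> + l\<^sup>2 * (b - a)\<^sup>2 / (8 * k)))"
    using assms by (intro nn_integral_exp_mean_indep_le) (auto simp: l_def)
  also have "l * -\<delta> + l\<^sup>2 * (b - a)\<^sup>2 / (8 * k) = - 2 * k * \<delta>\<^sup>2 / (b - a)\<^sup>2"
    using arith[of "(b - a)\<^sup>2"] \<open>a < b\<close> by (simp add: l_def)
  finally show ?thesis
    by (simp add: l_def)
qed

lemma (in prob_space) prob_pos_le_nn_integral_exp:
  assumes "0 < l" and [measurable]: "f \<in> borel_measurable M"
  shows "ennreal (prob {\<omega> \<in> space M. 0 < f \<omega>}) \<le> (\<integral>\<^sup>+\<omega>. exp (l * f \<omega>) \<partial>M)"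
proof -
  have "ennreal (prob {\<omega> \<in> space M. 0 < f \<omega>}) \<le> emeasure M {\<omega> \<in> space M. 0 \<le> f \<omega>}"
    unfolding emeasure_eq_measure by (intro ennreal_leI finite_measure_mono) auto
  also have "\<dots> \<le> ennreal (exp (- l * 0)) * (\<integral>\<^sup>+\<omega>. ennreal (exp (l * f \<omega>)) * indicator (space M) \<omega> \<partial>M)"
    using \<open>0 < l\<close> by (intro Chernoff_ineq_nn_integral_ge) auto
  also have "\<dots> = (\<integral>\<^sup>+\<omega>. exp (l * f \<omega>) \<partial>M)"
    by (auto intro!: nn_integral_cong simp: indicator_def)
  finally show ?thesis .
qed

lemma (in prob_space) prob_sum_indep_groups_pos_le:
  fixes G :: "'e \<Rightarrow> 'a \<Rightarrow> real" and E :: "'r \<Rightarrow> 'e set" and k :: real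
  assumes "finite R" and "\<And>r. r \<in> R \<Longrightarrow> finite (E r)"
    and indep: "\<And>r. r \<in> R \<Longrightarrow> indep_vars (\<lambda>_. borel) G (E r)"
    and "\<And>r e. r \<in> R \<Longrightarrow> e \<in> E r \<Longrightarrow> AE \<omega> in M. G e \<omega> \<in> {a..b}"
    and "\<And>r e. r \<in> R \<Longrightarrow> e \<in> E r \<Longrightarrow> expectation (G e) \<le> -\<delta>"
    and "0 < \<delta>" "a < b" "0 < k"
    and card_E: "\<And>r. r \<in> R \<Longrightarrow> k \<le> card (E r)"
  shows "prob {\<omega> \<in> space M. 0 < (\<Sum>r\<in>R. \<Sum>e\<in>E r. G e \<omega>)} \<le> exp (- 2 * k * \<delta>\<^sup>2 / (b - a)\<^sup>2)"
proof (cases "R = {}")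
  case False
  define T where "T r \<omega> = (\<Sum>e\<in>E r. G e \<omega>)" for r \<omega>
  define c where "c r = real (card (E r))" for r
  define N where "N = sum c R"
  define l where "l = 4 * k * \<delta> / (b - a)\<^sup>2"
  define Y where "Y r \<omega> = l * T r \<omega> / c r" for r \<omega>
  have c: "0 < c r" if "r \<in> R" for r
    using that card_E \<open>0 < k\<close> by (fastforce simp: c_def)
  have "0 < N"
    unfolding N_def using False c \<open>finite R\<close> by (intro sum_pos) auto
  have weights: "(\<Sum>r\<in>R. c r / N) = 1"
    using \<open>0 < N\<close> by (simp add: N_def flip: sum_divide_distrib)
  have "0 < l"
    using assms by (simp add: l_def)
  have [measurable]: "T r \<in> borel_measurable M" if "r \<in> R" for r
    using indep[OF that] unfolding T_def indep_vars_def by (auto intro!: borel_measurable_sum)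
  have [measurable]: "Y r \<in> borel_measurable M" if "r \<in> R" for r
    unfolding Y_def using that by measurable
  have group: "(\<integral>\<^sup>+\<omega>. exp (Y r \<omega>) \<partial>M) \<le> exp (- 2 * k * \<delta>\<^sup>2 / (b - a)\<^sup>2)" if "r \<in> R" for r
    unfolding Y_def T_def c_def l_def
    by (rule nn_integral_exp_mean_indep_le_Hoeffding) (use that assms in auto)
  have combination: "(l / N) * (\<Sum>r\<in>R. T r \<omega>) = (\<Sum>r\<in>R. c r / N * Y r \<omega>)" for \<omega>
    unfolding Y_def sum_distrib_left by (intro sum.cong refl) (use c in fastforce)
  have "ennreal (prob {\<omega> \<in> space M. 0 < (\<Sum>r\<in>R. T r \<omega>)}) \<le> (\<integral>\<^sup>+\<omega>. exp ((l / N) * (\<Sum>r\<in>R. T r \<omega>)) \<partial>M)"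
    using \<open>0 < l\<close> \<open>0 < N\<close> by (intro prob_pos_le_nn_integral_exp) auto
  also have "\<dots> \<le> (\<Sum>r\<in>R. ennreal (c r / N) * (\<integral>\<^sup>+\<omega>. exp (Y r \<omega>) \<partial>M))"
    unfolding combination using \<open>finite R\<close> \<open>0 < N\<close> weights
    by (intro nn_integral_exp_convex_combination_le) (auto simp: c_def)
  also have "\<dots> \<le> (\<Sum>r\<in>R. ennreal (c r / N) * ennreal (exp (- 2 * k * \<delta>\<^sup>2 / (b - a)\<^sup>2)))"
    by (intro sum_mono mult_left_mono group) auto
  also have "\<dots> = exp (- 2 * k * \<delta>\<^sup>2 / (b - a)\<^sup>2)"
    using \<open>0 < N\<close> weights by (simp add: c_def flip: sum_distrib_right)
  finally show ?thesis
    by (simp add: T_def)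
qed simp

section \<open>Independent samples\<close>

lemma (in prob_space) dist_var_distr:
  fixes X :: "'a \<Rightarrow> real"
  assumes "random_variable borel X"
  shows "dist_var (distr M borel X) = variance X"
  using assms by (simp add: dist_var_def integral_distr)

lemma (in prob_space) expectation_sq_diff_indep:
  fixes X Y :: "'a \<Rightarrow> real"
  assumes indep: "indep_var borel X borel Y"
    and sq_int: "integrable M (\<lambda>\<omega>. (X \<omega>)\<^sup>2)" "integrable M (\<lambda>\<omega>. (Y \<omega>)\<^sup>2)"
  shows "expectation (\<lambda>\<omega>. (X \<omega> - Y \<omega>)\<^sup>2) = variance X + variance Y + (expectation X - expectation Y)\<^sup>2"
proof -
  have [measurable]: "random_variable borel X" "random_variable borel Y"
    using indep by (auto simp: indep_var_eq)
  have int: "integrable M X" "integrable M Y"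
    using sq_int by (auto intro: square_integrable_imp_integrable)
  have "expectation (\<lambda>\<omega>. (X \<omega> - Y \<omega>)\<^sup>2)
      = expectation (\<lambda>\<omega>. (X \<omega>)\<^sup>2) - 2 * expectation (\<lambda>\<omega>. X \<omega> * Y \<omega>) + expectation (\<lambda>\<omega>. (Y \<omega>)\<^sup>2)"
    using sq_int indep_var_integrable[OF indep int] by (simp add: power2_diff mult.assoc)
  also have "expectation (\<lambda>\<omega>. X \<omega> * Y \<omega>) = expectation X * expectation Y"
    by (rule indep_var_lebesgue_integral[OF indep int])
  finally show ?thesis
    unfolding variance_eq[OF int(1) sq_int(1)] variance_eq[OF int(2) sq_int(2)] by (simp add: power2_diff algebra_simps)
qed

lemma (in prob_space) expectation_sq_diff_iid:
  fixes X Y :: "'a \<Rightarrow> real"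
  assumes "indep_var borel X borel Y" "distr M borel X = D" "distr M borel Y = D"
    and "integrable M (\<lambda>\<omega>. (X \<omega>)\<^sup>2)" "integrable M (\<lambda>\<omega>. (Y \<omega>)\<^sup>2)"
  shows "expectation (\<lambda>\<omega>. (X \<omega> - Y \<omega>)\<^sup>2) = 2 * dist_var D"
proof -
  have [measurable]: "random_variable borel X" "random_variable borel Y"
    using assms(1) by (auto simp: indep_var_eq)
  have "expectation X = (\<integral>x. x \<partial>D)"
    unfolding assms(2)[symmetric] by (simp add: integral_distr)
  moreover have "expectation Y = (\<integral>x. x \<partial>D)"
    unfolding assms(3)[symmetric] by (simp add: integral_distr)
  ultimately have "expectation X = expectation Y"
    by simp
  then show ?thesis
    using assms dist_var_distr[of X] dist_var_distr[of Y] by (simp add: expectation_sq_diff_indep)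
qed

lemma (in prob_space) indep_vars_compose_blocks:
  assumes "indep_vars (\<lambda>_. borel) Z I" "\<And>j. j \<in> J \<Longrightarrow> B j \<subseteq> I" "disjoint_family_on B J"
    and "\<And>j. j \<in> J \<Longrightarrow> f j \<in> borel_measurable (PiM (B j) (\<lambda>_. borel))"
  shows "indep_vars (\<lambda>_. borel) (\<lambda>j \<omega>. f j (\<lambda>p\<in>B j. Z p \<omega>)) J"
  using indep_vars_compose2[OF indep_vars_restrict[OF assms(1-3)] assms(4)] .

section \<open>Two arms\<close>

lemma half_diff_sq_diff_in_interval:
  fixes u u' v v' :: real
  assumes "u \<in> {0..1}" "u' \<in> {0..1}" "v \<in> {0..1}" "v' \<in> {0..1}"
  shows "((u - u')\<^sup>2 - (v - v')\<^sup>2) / 2 \<in> {-1/2..1/2}"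
proof -
  have sq_diff: "(x - y)\<^sup>2 \<in> {0..1}" if "x \<in> {0..1}" "y \<in> {0..1}" for x y :: real
    using that by (auto simp: abs_square_le_1)
  have half_diff: "(A - B) / 2 \<in> {-1/2..1/2}" if "A \<in> {0..1}" "B \<in> {0..1}" for A B :: real
    using that by simp
  show ?thesis
    using assms by (intro half_diff sq_diff)
qed

locale two_arms = prob_space M for M :: "'a measure" +
  fixes X :: "'j \<Rightarrow> nat \<Rightarrow> 'a \<Rightarrow> real" and D :: "'j \<Rightarrow> real measure" and i s :: 'j
  assumes indep: "indep_vars (\<lambda>_. borel) (\<lambda>(j, q). X j q) ({i, s} \<times> UNIV)"
    and distr: "\<And>j q. j \<in> {i, s} \<Longrightarrow> distr M borel (X j q) = D j"
    and rewards_in_unit: "\<And>j q. j \<in> {i, s} \<Longrightarrow> AE \<omega> in M. X j q \<omega> \<in> {0..1}"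
begin

lemma random_variable_reward [measurable]: "j \<in> {i, s} \<Longrightarrow> random_variable borel (X j q)"
  using indep unfolding indep_vars_def by auto

lemma square_integrable_reward:
  assumes "j \<in> {i, s}"
  shows "integrable M (\<lambda>\<omega>. (X j q \<omega>)\<^sup>2)"
proof (rule integrable_const_bound[where B = 1])
  show "AE \<omega> in M. norm ((X j q \<omega>)\<^sup>2) \<le> 1"
    using rewards_in_unit[OF assms, of q] by eventually_elim (simp add: abs_square_le_1)
qed (use assms in measurable)

lemma integrable_sq_diff_rewards:
  assumes "j \<in> {i, s}"
  shows "integrable M (\<lambda>\<omega>. (X j p \<omega> - X j q \<omega>)\<^sup>2)"
proof (rule integrable_const_bound[where B = 1])
  show "AE \<omega> in M. norm ((X j p \<omega> - X j q \<omega>)\<^sup>2) \<le> 1"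
    using rewards_in_unit[OF assms, of p] rewards_in_unit[OF assms, of q]
    by eventually_elim (simp add: abs_square_le_1 abs_le_iff)
qed (use assms in measurable)

lemma expectation_sq_diff_rewards:
  assumes "j \<in> {i, s}" "p \<noteq> q"
  shows "expectation (\<lambda>\<omega>. (X j p \<omega> - X j q \<omega>)\<^sup>2) = 2 * dist_var (D j)"
proof (rule expectation_sq_diff_iid)
  have "indep_var borel ((\<lambda>(j, q). X j q) (j, p)) borel (\<lambda>\<omega>. \<Sum>k\<in>{(j, q)}. (\<lambda>(j, q). X j q) k \<omega>)"
    using assms by (intro indep_vars_sum indep_vars_subset[OF indep]) auto
  then show "indep_var borel (X j p) borel (X j q)"
    by simp
qed (use assms distr square_integrable_reward in auto)

text \<open>The pair (p, q) refers to the samples numbered p + 1 and q + 1.\<close>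

definition contrast :: "nat \<times> nat \<Rightarrow> 'a \<Rightarrow> real" where
  "contrast = (\<lambda>(p, q) \<omega>. ((X i (Suc p) \<omega> - X i (Suc q) \<omega>)\<^sup>2 - (X s (Suc p) \<omega> - X s (Suc q) \<omega>)\<^sup>2) / 2)"

lemma contrast_in_interval: "AE \<omega> in M. contrast e \<omega> \<in> {-1/2..1/2}"
proof (cases e)
  case (Pair p q)
  have "AE \<omega> in M. X i (Suc p) \<omega> \<in> {0..1} \<and> X i (Suc q) \<omega> \<in> {0..1} \<and> X s (Suc p) \<omega> \<in> {0..1} \<and> X s (Suc q) \<omega> \<in> {0..1}"
    by (intro AE_conjI rewards_in_unit) auto
  then show ?thesis
    by eventually_elim (simp only: Pair contrast_def case_prod_conv half_diff_sq_diff_in_interval)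
qed

lemma expectation_contrast:
  assumes "p \<noteq> q"
  shows "expectation (contrast (p, q)) = dist_var (D i) - dist_var (D s)"
proof -
  have "integrable M (\<lambda>\<omega>. (X j (Suc p) \<omega> - X j (Suc q) \<omega>)\<^sup>2)" if "j \<in> {i, s}" for j
    using that by (rule integrable_sq_diff_rewards)
  then show ?thesis
    using assms expectation_sq_diff_rewards[of i "Suc p" "Suc q"] expectation_sq_diff_rewards[of s "Suc p" "Suc q"]
    by (simp add: contrast_def)
qed

lemma indep_vars_contrast: "indep_vars (\<lambda>_. borel) contrast (cyclic_matching t r)"
proof -
  define B where "B e = {i, s} \<times> {Suc (fst e), Suc (snd e)}" for e :: "nat \<times> nat"
  define H where "H e f = ((f (i, Suc (fst e)) - f (i, Suc (snd e)))\<^sup>2 - (f (s, Suc (fst e)) - f (s, Suc (snd e)))\<^sup>2) / 2"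
    for e :: "nat \<times> nat" and f :: "'j \<times> nat \<Rightarrow> real"
  have "indep_vars (\<lambda>_. borel) (\<lambda>e \<omega>. H e (\<lambda>p\<in>B e. (\<lambda>(j, q). X j q) p \<omega>)) (cyclic_matching t r)"
  proof (rule indep_vars_compose_blocks[OF indep])
    show "disjoint_family_on B (cyclic_matching t r)"
      unfolding disjoint_family_on_def
    proof (intro ballI impI)
      fix e e' assume "e \<in> cyclic_matching t r" "e' \<in> cyclic_matching t r" "e \<noteq> e'"
      then have "{fst e, snd e} \<inter> {fst e', snd e'} = {}"
        using cyclic_matching_disjoint[of "fst e" "snd e" t r "fst e'" "snd e'"] by simp
      then show "B e \<inter> B e' = {}"
        by (auto simp: B_def)
    qed
    fix e
    have "(i, Suc (fst e)) \<in> B e" "(i, Suc (snd e)) \<in> B e" "(s, Suc (fst e)) \<in> B e" "(s, Suc (snd e)) \<in> B e"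
      by (auto simp: B_def)
    then show "H e \<in> borel_measurable (PiM (B e) (\<lambda>_. borel))"
      unfolding H_def by measurable
  qed (auto simp: B_def)
  then show ?thesis
    by (rule indep_vars_cong[THEN iffD1, rotated -1]) (auto simp: contrast_def H_def B_def fun_eq_iff split: prod.split)
qed

lemma prob_sample_var_gt_le:
  assumes gap: "dist_var (D i) < dist_var (D s)" and "1 \<le> t"
  shows "prob {\<omega> \<in> space M. sample_var t (\<lambda>q. X i q \<omega>) > sample_var t (\<lambda>q. X s q \<omega>)}
           \<le> exp (- ((real t - 1)\<^sup>2 * (dist_var (D s) - dist_var (D i))\<^sup>2) / (2 * real t))"
proof (cases "t = 1")
  case False
  then have "2 \<le> t"
    using \<open>1 \<le> t\<close> by simp
  define \<delta> where "\<delta> = dist_var (D s) - dist_var (D i)"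
  define k where "k = (real t - 1)\<^sup>2 / (4 * real t)"
  define R where "R = {r \<in> {..<t}. cyclic_matching t r \<noteq> {}}"
  have "(\<Sum>r<t. \<Sum>e\<in>cyclic_matching t r. contrast e \<omega>) = (\<Sum>r\<in>R. \<Sum>e\<in>cyclic_matching t r. contrast e \<omega>)" for \<omega>
    unfolding R_def by (intro sum.mono_neutral_right) auto
  then have "{\<omega> \<in> space M. sample_var t (\<lambda>q. X i q \<omega>) > sample_var t (\<lambda>q. X s q \<omega>)}
      = {\<omega> \<in> space M. 0 < (\<Sum>r\<in>R. \<Sum>e\<in>cyclic_matching t r. contrast e \<omega>)}"
    using \<open>2 \<le> t\<close> by (simp add: sample_var_less_iff_sum_cyclic_matchings contrast_def case_prod_beta)
  also have "prob \<dots> \<le> exp (- 2 * k * \<delta>\<^sup>2 / (1/2 - -1/2)\<^sup>2)"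
  proof (rule prob_sum_indep_groups_pos_le)
    show "AE \<omega> in M. contrast e \<omega> \<in> {-1/2..1/2}" for e
      by (rule contrast_in_interval)
    show "expectation (contrast e) \<le> - \<delta>" if "e \<in> cyclic_matching t r" for r e
      using that by (auto simp: cyclic_matching_def expectation_contrast \<delta>_def)
    show "k \<le> real (card (cyclic_matching t r))" if "r \<in> R" for r
      using that unfolding k_def R_def by (intro card_cyclic_matching_ge_nonempty) auto
  qed (use gap \<open>2 \<le> t\<close> in \<open>auto simp: \<delta>_def k_def R_def indep_vars_contrast\<close>)
  also have "\<dots> = exp (- ((real t - 1)\<^sup>2 * \<delta>\<^sup>2) / (2 * real t))"
    by (simp add: k_def)
  finally show ?thesis
    by (simp add: \<delta>_def)
qed (simp add: sample_var_def)

end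

theorem lemma3:
  fixes M :: "'a measure" and K :: nat
    and D :: "nat \<Rightarrow> real measure"
    and X :: "nat \<Rightarrow> nat \<Rightarrow> 'a \<Rightarrow> real"
    and s i t :: nat
  assumes "prob_space M"
    and D_prob: "\<And>j. j < K \<Longrightarrow> prob_space (D j)"
    and D_sets: "\<And>j. j < K \<Longrightarrow> sets (D j) = sets borel"
    and D_supp: "\<And>j. j < K \<Longrightarrow> (AE x in D j. 0 \<le> x \<and> x \<le> 1)"
    and X_meas: "\<And>j q. j < K \<Longrightarrow> X j q \<in> borel_measurable M"
    and X_distr: "\<And>j q. j < K \<Longrightarrow> distr M borel (X j q) = D j"
    and X_indep: "prob_space.indep_vars M (\<lambda>_. borel) (\<lambda>(j, q). X j q) ({..<K} \<times> UNIV)"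
    and s_arm: "s < K"
    and s_best: "\<And>j. j < K \<Longrightarrow> j \<noteq> s \<Longrightarrow> dist_var (D j) < dist_var (D s)"
    and i_arm: "i < K"
    and t_pos: "t \<ge> 1"
  shows "measure M {\<omega> \<in> space M. sample_var t (\<lambda>q. X i q \<omega>) > sample_var t (\<lambda>q. X s q \<omega>)}
           \<le> exp (- ((real t - 1)\<^sup>2 * (dist_var (D s) - dist_var (D i))\<^sup>2) / (2 * real t))"
proof -
  interpret prob_space M by fact
  show ?thesis
  proof (cases "i = s")
    case False
    have arms: "j < K" if "j \<in> {i, s}" for j
      using that i_arm s_arm by auto
    interpret two_arms M X D i s
    proof
      show "indep_vars (\<lambda>_. borel) (\<lambda>(j, q). X j q) ({i, s} \<times> UNIV)"
        using arms by (intro indep_vars_subset[OF X_indep]) auto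
      show "distr M borel (X j q) = D j" if "j \<in> {i, s}" for j q
        using arms[OF that] by (rule X_distr)
      show "AE \<omega> in M. X j q \<omega> \<in> {0..1}" if "j \<in> {i, s}" for j q
      proof (rule AE_distrD[OF X_meas[OF arms[OF that]]])
        show "AE x in distr M borel (X j q). x \<in> {0..1}"
          unfolding X_distr[OF arms[OF that]] atLeastAtMost_iff by (rule D_supp[OF arms[OF that]])
      qed
    qed
    show ?thesis
      using s_best[OF i_arm False] t_pos by (rule prob_sample_var_gt_le)
  qed simp
qed

end
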